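(* Let $q:\mathbb{R}\to\mathbb{C}$ be a Schwartz-class function and set $r(x)=-q^*(-x)$ (the reverse-space reduction, i.e. $Q(x)=\begin{pmatrix}0&q(x)\\-q^*(-x)&0\end{pmatrix}$). Then, for the eigenvalue problem $Y_x=-i\zeta\Lambda Y+QY$ and its adjoint $K_x=i\zeta K\Lambda-KQ$: (1) If $\zeta\in\mathbb{C}_+$ is an eigenvalue with eigenfunction $Y$ and eigenvector $v_0$, then $-\zeta^*\in\mathbb{C}_+$ is also an eigenvalue, $\widehat Y(x)=\sigma_1Y^*(-x)$ is an eigenfunction for it, and its eigenvector is $-\sigma_1 v_0^*$. Consequently, if $\zeta\notin i\mathbb{R}_+$ (so that $-\zeta^*\neq\zeta$), every eigenvector of $-\zeta^*$ is a nonzero scalar multiple of $\sigma_1v_0^*$. (2) If $\zeta\in i\mathbb{R}_+$ is an eigenvalue, then its eigenvector, normalized so that its first component equals $1$, has the form $v_0=[1,e^{i\theta}]^T$ with $\theta\in\mathbb{R}$. (3) If $\bar\zeta\in\mathbb{C}_-$ is an adjoint eigenvalue with adjoint eigenfunction $K$ and adjoint eigenvector $\bar v_0$, then $-\bar\zeta^*\in\mathbb{C}_-$ is also an adjoint eigenvalue, $\widehat K(x)=K^*(-x)\sigma_1$ is an adjoint eigenfunction for it, and its adjoint eigenvector is $-\bar v_0^*\sigma_1$. Consequently, if $\bar\zeta\notin i\mathbb{R}_-$, every adjoint eigenvector of $-\bar\zeta^*$ is a nonzero scalar multiple of $\bar v_0^*\sigma_1$. (4) If $\bar\zeta\in i\mathbb{R}_-$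 is an adjoint eigenvalue, then its adjoint eigenvector, normalized so that its first component equals $1$, has the form $\bar v_0=[1,e^{i\bar\theta}]$ with $\bar\theta\in\mathbb{R}$.
   Context: Notation: $\Lambda=\mathrm{diag}(1,-1)$, $\sigma_1=\begin{pmatrix}0&1\\1&0\end{pmatrix}$, $\mathbb{C}_\pm$ are the open upper/lower half planes, $i\mathbb{R}_\pm$ the positive/negative imaginary half-axes, $^*$ denotes complex conjugation and $^T$ transpose. For complex functions $q(x),r(x)$ decaying rapidly as $|x|\to\infty$, put $Q(x)=\begin{pmatrix}0&q(x)\\ r(x)&0\end{pmatrix}$ and consider the eigenvalue problem $Y_x=-i\zeta\Lambda Y+QY$ ($Y$ a $2\times1$ column) and the adjoint problem $K_x=i\zeta K\Lambda-KQ$ ($K$ a $1\times2$ row). Definition (eigenvalue, eigenvector): $\zeta\in\mathbb{C}_+$ is an eigenvalue if there is a nonzero solution $Y$ (an eigenfunction) of $Y_x=-i\zeta\Lambda Y+QY$ and constants $a,b\in\mathbb{C}$ with $e^{i\zeta x}Y(x)\to[a,0]^T$ as $x\to-\infty$ and $e^{-i\zeta x}Y(x)\to[0,-b]^T$ as $x\to+\infty$; the column vector $v_0=[a,b]^T$ is called the eigenvector associated with $Y$. (For such $\zeta$ the solutions with this decay at $-\infty$ form a one-dimensional space, so eigenvectors of a given eigenvalue are determined up to a nonzero scalar, and $a\neq0$.) Definition (adjoint eigenvalue, adjoint eigenvector): $\bar\zeta\in\mathbb{C}_-$ is an adjoint eigenvalue if there is a nonzero row solution $K$ of $K_x=i\bar\zeta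 K\Lambda-KQ$ and constants $\bar a,\bar b$ with $e^{-i\bar\zeta x}K(x)\to[\bar a,0]$ as $x\to-\infty$ and $e^{i\bar\zeta x}K(x)\to[0,-\bar b]$ as $x\to+\infty$; the row vector $\bar v_0=[\bar a,\bar b]$ is the associated adjoint eigenvector (again determined up to a nonzero scalar, with $\bar a\ne0$). These eigenvalue problems are the $x$-parts of the Lax pair of the coupled system $iq_t+q_{xx}-2q^2r=0$, $ir_t-r_{xx}+2r^2q=0$, which under $r(x,t)=-q^*(-x,t)$ reduces to the reverse-space NLS equation $iq_t(x,t)+q_{xx}(x,t)+2q^2(x,t)q^*(-x,t)=0$; here $q$ plays the role of the initial condition $q(x,0)$. *)

theory Defs
  imports "HOL-Analysis.Analysis"
begin

definition schwartz :: "(real \<Rightarrow> complex) \<Rightarrow> bool" where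
  "schwartz q \<longleftrightarrow> (\<exists>D :: nat \<Rightarrow> real \<Rightarrow> complex.
      D 0 = q \<and>
      (\<forall>n x. (D n has_vector_derivative D (Suc n) x) (at x)) \<and>
      (\<forall>m n. bounded (range (\<lambda>x. of_real (x ^ m) * D n x))))"

text \<open>Column solution Y = (Y1, Y2) of  Y_x = -i zeta Lambda Y + Q Y,
  with Q = [[0,q],[r,0]], Lambda = diag(1,-1).\<close>
definition solves_eig :: "(real \<Rightarrow> complex) \<Rightarrow> (real \<Rightarrow> complex) \<Rightarrow> complex
     \<Rightarrow> (real \<Rightarrow> complex \<times> complex) \<Rightarrow> bool" where
  "solves_eig q r \<zeta> Y \<longleftrightarrow> (\<forall>x. (Y has_vector_derivative
      (- \<i> * \<zeta> * fst (Y x) + q x * snd (Y x),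
         \<i> * \<zeta> * snd (Y x) + r x * fst (Y x))) (at x))"

text \<open>Row solution K = (K1, K2) of  K_x = i zeta K Lambda - K Q.\<close>
definition solves_adj :: "(real \<Rightarrow> complex) \<Rightarrow> (real \<Rightarrow> complex) \<Rightarrow> complex
     \<Rightarrow> (real \<Rightarrow> complex \<times> complex) \<Rightarrow> bool" where
  "solves_adj q r \<zeta> K \<longleftrightarrow> (\<forall>x. (K has_vector_derivative
      (\<i> * \<zeta> * fst (K x) - snd (K x) * r x,
       - \<i> * \<zeta> * snd (K x) - fst (K x) * q x)) (at x))"

definition eigenfunction :: "(real \<Rightarrow> complex) \<Rightarrow> (real \<Rightarrow> complex) \<Rightarrow> complex
     \<Rightarrow> (real \<Rightarrow> complex \<times> complex) \<Rightarrow> complex \<times> complex \<Rightarrow> bool" where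
  "eigenfunction q r \<zeta> Y v \<longleftrightarrow> Im \<zeta> > 0 \<and> solves_eig q r \<zeta> Y \<and> (\<exists>x. Y x \<noteq> 0) \<and>
     ((\<lambda>x. (exp (\<i> * \<zeta> * of_real x) * fst (Y x), exp (\<i> * \<zeta> * of_real x) * snd (Y x)))
        \<longlongrightarrow> (fst v, 0)) at_bot \<and>
     ((\<lambda>x. (exp (- \<i> * \<zeta> * of_real x) * fst (Y x), exp (- \<i> * \<zeta> * of_real x) * snd (Y x)))
        \<longlongrightarrow> (0, - snd v)) at_top"

definition is_eigenvalue :: "(real \<Rightarrow> complex) \<Rightarrow> (real \<Rightarrow> complex) \<Rightarrow> complex \<Rightarrow> bool" where
  "is_eigenvalue q r \<zeta> \<longleftrightarrow> (\<exists>Y v. eigenfunction q r \<zeta> Y v)"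

definition is_eigenvector :: "(real \<Rightarrow> complex) \<Rightarrow> (real \<Rightarrow> complex) \<Rightarrow> complex \<Rightarrow> complex \<times> complex \<Rightarrow> bool" where
  "is_eigenvector q r \<zeta> v \<longleftrightarrow> (\<exists>Y. eigenfunction q r \<zeta> Y v)"

definition adj_eigenfunction :: "(real \<Rightarrow> complex) \<Rightarrow> (real \<Rightarrow> complex) \<Rightarrow> complex
     \<Rightarrow> (real \<Rightarrow> complex \<times> complex) \<Rightarrow> complex \<times> complex \<Rightarrow> bool" where
  "adj_eigenfunction q r \<zeta> K v \<longleftrightarrow> Im \<zeta> < 0 \<and> solves_adj q r \<zeta> K \<and> (\<exists>x. K x \<noteq> 0) \<and>
     ((\<lambda>x. (exp (- \<i> * \<zeta> * of_real x) * fst (K x), exp (- \<i> * \<zeta> * of_real x) * snd (K x)))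
        \<longlongrightarrow> (fst v, 0)) at_bot \<and>
     ((\<lambda>x. (exp (\<i> * \<zeta> * of_real x) * fst (K x), exp (\<i> * \<zeta> * of_real x) * snd (K x)))
        \<longlongrightarrow> (0, - snd v)) at_top"

definition is_adj_eigenvalue :: "(real \<Rightarrow> complex) \<Rightarrow> (real \<Rightarrow> complex) \<Rightarrow> complex \<Rightarrow> bool" where
  "is_adj_eigenvalue q r \<zeta> \<longleftrightarrow> (\<exists>K v. adj_eigenfunction q r \<zeta> K v)"

definition is_adj_eigenvector :: "(real \<Rightarrow> complex) \<Rightarrow> (real \<Rightarrow> complex) \<Rightarrow> complex \<Rightarrow> complex \<times> complex \<Rightarrow> bool" where
  "is_adj_eigenvector q r \<zeta> v \<longleftrightarrow> (\<exists>K. adj_eigenfunction q r \<zeta> K v)"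

end

theory Submission
  imports Defs
begin

text \<open>
  Under r(x) = -q*(-x) the map Y(x) \<mapsto> \<sigma>1 Y*(-x) sends solutions for \<zeta> to solutions for -\<zeta>*
  and exchanges the behaviour at -\<infinity> and +\<infinity>; this gives the reflected eigenfunction.
  Uniqueness comes from an energy estimate: if |q|, |r| \<le> C/(1+x^2), then N = |Y1|^2 + |Y2|^2
  satisfies N' \<le> (2 Im \<zeta> + 2C/(1+x^2)) N, so N exp(-2 Im \<zeta> x - 2C arctan x) is nonincreasing,
  and a solution with exp(i\<zeta>x) Y \<rightarrow> 0 at -\<infinity> vanishes identically. Hence an eigenfunction is
  determined up to a scalar by its limit at -\<infinity>.
  For imaginary \<zeta> the eigenvalue is its own reflection, so (a, b) is proportional to (b*, a*),
  which forces |a| = |b|. The adjoint problem for (q, r, \<zeta>) is the eigenvalue problem for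
  (-r, -q, -\<zeta>), again of reverse-space type.
\<close>

lemma has_real_derivative_cmod_power2:
  assumes "(g has_vector_derivative g') (at x)"
  shows "((\<lambda>x. (cmod (g x))\<^sup>2) has_real_derivative 2 * Re (cnj (g x) * g')) (at x)"
proof -
  have "((\<lambda>x. Re (g x * cnj (g x))) has_vector_derivative Re (g x * cnj g' + g' * cnj (g x))) (at x)"
    by (intro bounded_linear.has_vector_derivative[OF bounded_linear_Re] derivative_intros assms)
  moreover have "\<And>x. Re (g x * cnj (g x)) = (cmod (g x))\<^sup>2"
    by (metis Re_complex_of_real complex_norm_square)
  ultimately show ?thesis
    by (simp add: has_real_derivative_iff_has_vector_derivative mult.commute)
qed

lemma gronwall_vanish_at_bot:
  fixes N N' h H :: "real \<Rightarrow> real"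
  assumes N_nonneg: "\<And>t. 0 \<le> N t"
    and N_deriv: "\<And>t. (N has_real_derivative N' t) (at t)"
    and N'_le: "\<And>t. N' t \<le> (\<alpha> + h t) * N t"
    and H_deriv: "\<And>t. (H has_real_derivative h t) (at t)"
    and H_lim: "(H \<longlongrightarrow> L) at_bot"
    and N_lim: "((\<lambda>x. N x * exp (- \<alpha> * x)) \<longlongrightarrow> 0) at_bot"
  shows "N x = 0"
proof -
  define V where "V x = N x * exp (- \<alpha> * x - H x)" for x
  have V_deriv: "(V has_real_derivative (N' t - (\<alpha> + h t) * N t) * exp (- \<alpha> * t - H t)) (at t)" for t
    unfolding V_def[abs_def]
    by (auto intro!: derivative_eq_intros N_deriv H_deriv simp: algebra_simps)
  have V_antimono: "V y \<le> V x" if "x \<le> y" for x y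
    using DERIV_nonpos_imp_nonincreasing[OF that] V_deriv N'_le
    by (metis diff_le_0_iff_le exp_gt_zero less_eq_real_def mult_nonpos_nonneg)
  have "((\<lambda>x. N x * exp (- \<alpha> * x) * exp (- H x)) \<longlongrightarrow> 0 * exp (- L)) at_bot"
    by (intro tendsto_intros N_lim H_lim)
  then have V_lim: "(V \<longlongrightarrow> 0) at_bot"
    unfolding V_def by (simp add: exp_diff exp_minus field_simps)
  have "V x \<le> 0"
    by (rule tendsto_lowerbound[OF V_lim]) (auto simp: eventually_at_bot_linorder intro: V_antimono)
  moreover have "0 \<le> V x" unfolding V_def using N_nonneg by simp
  ultimately show ?thesis unfolding V_def by simp
qed

lemma Re_cnj_mult_affine:
  fixes y z w :: complex
  shows "Re (cnj y * (z * y + w)) = Re z * (cmod y)\<^sup>2 + Re (w * cnj y)"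
proof -
  have "cnj y * (z * y + w) = z * of_real ((cmod y)\<^sup>2) + w * cnj y"
    using complex_norm_square[of y] by (simp add: algebra_simps)
  then show ?thesis by simp
qed

lemma solves_eig_normsq_deriv:
  assumes "solves_eig q r \<zeta> Y"
  shows "((\<lambda>x. (cmod (fst (Y x)))\<^sup>2 + (cmod (snd (Y x)))\<^sup>2) has_real_derivative
     2 * Im \<zeta> * ((cmod (fst (Y t)))\<^sup>2 - (cmod (snd (Y t)))\<^sup>2)
     + 2 * Re (q t * snd (Y t) * cnj (fst (Y t))) + 2 * Re (r t * fst (Y t) * cnj (snd (Y t)))) (at t)"
proof -
  have dY: "(Y has_vector_derivative (- \<i> * \<zeta> * fst (Y t) + q t * snd (Y t),
      \<i> * \<zeta> * snd (Y t) + r t * fst (Y t))) (at t)"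
    using assms unfolding solves_eig_def by blast
  have Re_i\<zeta>: "Re (- \<i> * \<zeta>) = Im \<zeta>" "Re (\<i> * \<zeta>) = - Im \<zeta>"
    by simp_all
  have "((\<lambda>x. (cmod (fst (Y x)))\<^sup>2) has_real_derivative
      2 * (Im \<zeta> * (cmod (fst (Y t)))\<^sup>2 + Re (q t * snd (Y t) * cnj (fst (Y t))))) (at t)"
    using has_real_derivative_cmod_power2[OF bounded_linear.has_vector_derivative[OF bounded_linear_fst dY]]
    unfolding fst_conv snd_conv Re_cnj_mult_affine Re_i\<zeta> .
  moreover have "((\<lambda>x. (cmod (snd (Y x)))\<^sup>2) has_real_derivative
      2 * (- Im \<zeta> * (cmod (snd (Y t)))\<^sup>2 + Re (r t * fst (Y t) * cnj (snd (Y t))))) (at t)"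
    using has_real_derivative_cmod_power2[OF bounded_linear.has_vector_derivative[OF bounded_linear_snd dY]]
    unfolding fst_conv snd_conv Re_cnj_mult_affine Re_i\<zeta> .
  ultimately show ?thesis
    by (rule DERIV_add[THEN DERIV_cong]) (simp add: algebra_simps)
qed

lemma Re_mult_cnj_le:
  fixes w y z :: complex
  assumes "cmod w \<le> k"
  shows "Re (w * z * cnj y) \<le> k * cmod y * cmod z"
proof -
  have "Re (w * z * cnj y) \<le> cmod w * cmod y * cmod z"
    by (metis complex_Re_le_cmod complex_mod_cnj mult.commute mult.left_commute norm_mult)
  also have "\<dots> \<le> k * cmod y * cmod z"
    using assms by (simp add: mult_right_mono)
  finally show ?thesis .
qed

lemma energy_derivative_le:
  fixes u v y z :: complex
  assumes "0 \<le> Im \<zeta>" "cmod u \<le> k" "cmod v \<le> k"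
  shows "2 * Im \<zeta> * ((cmod y)\<^sup>2 - (cmod z)\<^sup>2) + 2 * Re (u * z * cnj y) + 2 * Re (v * y * cnj z)
    \<le> (2 * Im \<zeta> + 2 * k) * ((cmod y)\<^sup>2 + (cmod z)\<^sup>2)"
proof -
  define A where "A = Re (u * z * cnj y)"
  define B where "B = Re (v * y * cnj z)"
  have "A \<le> k * cmod y * cmod z" unfolding A_def by (rule Re_mult_cnj_le[OF assms(2)])
  moreover have "B \<le> k * cmod z * cmod y" unfolding B_def by (rule Re_mult_cnj_le[OF assms(3)])
  moreover have "0 \<le> k" using assms(2) norm_ge_zero order_trans by blast
  then have "0 \<le> k * (cmod y - cmod z)\<^sup>2" by simp
  moreover have "0 \<le> Im \<zeta> * (cmod z)\<^sup>2" using assms(1) by simp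
  ultimately have "2 * Im \<zeta> * ((cmod y)\<^sup>2 - (cmod z)\<^sup>2) + 2 * A + 2 * B
      \<le> (2 * Im \<zeta> + 2 * k) * ((cmod y)\<^sup>2 + (cmod z)\<^sup>2)"
    by (simp add: power2_diff algebra_simps)
  then show ?thesis unfolding A_def B_def .
qed

lemma solves_eig_vanish_at_bot:
  assumes q_bound: "\<And>x. cmod (q x) * (1 + x\<^sup>2) \<le> C"
    and r_bound: "\<And>x. cmod (r x) * (1 + x\<^sup>2) \<le> C"
    and "0 \<le> Im \<zeta>" and sol: "solves_eig q r \<zeta> Y"
    and lim: "((\<lambda>x. (exp (\<i> * \<zeta> * of_real x) * fst (Y x), exp (\<i> * \<zeta> * of_real x) * snd (Y x)))
       \<longlongrightarrow> (0, 0)) at_bot"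
  shows "Y x = 0"
proof -
  define N where "N x = (cmod (fst (Y x)))\<^sup>2 + (cmod (snd (Y x)))\<^sup>2" for x
  define N' where "N' t = 2 * Im \<zeta> * ((cmod (fst (Y t)))\<^sup>2 - (cmod (snd (Y t)))\<^sup>2)
     + 2 * Re (q t * snd (Y t) * cnj (fst (Y t))) + 2 * Re (r t * fst (Y t) * cnj (snd (Y t)))" for t
  have "N x = 0"
  proof (rule gronwall_vanish_at_bot[where N = N and \<alpha> = "2 * Im \<zeta>"
        and h = "\<lambda>t. 2 * (C / (1 + t\<^sup>2))" and H = "\<lambda>t. 2 * C * arctan t"])
    show "(N has_real_derivative N' t) (at t)" for t
      unfolding N_def[abs_def] N'_def by (rule solves_eig_normsq_deriv[OF sol])
    show "N' t \<le> (2 * Im \<zeta> + 2 * (C / (1 + t\<^sup>2))) * N t" for t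
      unfolding N_def N'_def
      using q_bound[of t] r_bound[of t] \<open>0 \<le> Im \<zeta>\<close>
      by (intro energy_derivative_le) (simp_all add: field_simps add_pos_nonneg)
    show "((\<lambda>t. 2 * C * arctan t) has_real_derivative 2 * (C / (1 + t\<^sup>2))) (at t)" for t
      by (auto intro!: derivative_eq_intros simp: field_simps)
    show "((\<lambda>t. 2 * C * arctan t) \<longlongrightarrow> 2 * C * - (pi / 2)) at_bot"
      by (intro tendsto_intros tendsto_arctan_at_bot)
    have "((\<lambda>x. (cmod (exp (\<i> * \<zeta> * of_real x) * fst (Y x)))\<^sup>2
        + (cmod (exp (\<i> * \<zeta> * of_real x) * snd (Y x)))\<^sup>2) \<longlongrightarrow> 0\<^sup>2 + 0\<^sup>2) at_bot"
      using lim by (intro tendsto_intros tendsto_norm_zero) (auto dest: tendsto_fst tendsto_snd)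
    moreover have "(cmod (exp (\<i> * \<zeta> * of_real x)))\<^sup>2 = exp (- (2 * Im \<zeta>) * x)" for x
      by (simp add: exp_double[symmetric])
    ultimately show "((\<lambda>x. N x * exp (- (2 * Im \<zeta>) * x)) \<longlongrightarrow> 0) at_bot"
      by (simp add: N_def norm_mult algebra_simps)
  qed (simp add: N_def)
  then show ?thesis unfolding N_def by (simp add: prod_eq_iff)
qed

lemma solves_eig_diff_scaled:
  assumes "solves_eig q r \<zeta> Y" "solves_eig q r \<zeta> Y'"
  shows "solves_eig q r \<zeta> (\<lambda>x. (fst (Y' x) - c * fst (Y x), snd (Y' x) - c * snd (Y x)))"
  unfolding solves_eig_def
proof
  fix x
  have "(Y has_vector_derivative (- \<i> * \<zeta> * fst (Y x) + q x * snd (Y x),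
      \<i> * \<zeta> * snd (Y x) + r x * fst (Y x))) (at x)"
    "(Y' has_vector_derivative (- \<i> * \<zeta> * fst (Y' x) + q x * snd (Y' x),
      \<i> * \<zeta> * snd (Y' x) + r x * fst (Y' x))) (at x)"
    using assms unfolding solves_eig_def by blast+
  from this[THEN bounded_linear.has_vector_derivative[OF bounded_linear_fst]]
    this[THEN bounded_linear.has_vector_derivative[OF bounded_linear_snd]]
  show "((\<lambda>x. (fst (Y' x) - c * fst (Y x), snd (Y' x) - c * snd (Y x))) has_vector_derivative
      (- \<i> * \<zeta> * fst (fst (Y' x) - c * fst (Y x), snd (Y' x) - c * snd (Y x))
         + q x * snd (fst (Y' x) - c * fst (Y x), snd (Y' x) - c * snd (Y x)),
       \<i> * \<zeta> * snd (fst (Y' x) - c * fst (Y x), snd (Y' x) - c * snd (Y x))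
         + r x * fst (fst (Y' x) - c * fst (Y x), snd (Y' x) - c * snd (Y x)))) (at x)"
    by (auto intro!: derivative_eq_intros simp: algebra_simps)
qed

lemma eigenfunction_fst_nonzero:
  assumes "\<And>x. cmod (q x) * (1 + x\<^sup>2) \<le> C" "\<And>x. cmod (r x) * (1 + x\<^sup>2) \<le> C"
    and "eigenfunction q r \<zeta> Y (a, b)"
  shows "a \<noteq> 0"
proof
  assume "a = 0"
  with assms(3) have "0 \<le> Im \<zeta>" "solves_eig q r \<zeta> Y"
    "((\<lambda>x. (exp (\<i> * \<zeta> * of_real x) * fst (Y x), exp (\<i> * \<zeta> * of_real x) * snd (Y x)))
       \<longlongrightarrow> (0, 0)) at_bot"
    unfolding eigenfunction_def by auto
  then have "Y x = 0" for x by (rule solves_eig_vanish_at_bot[OF assms(1,2)])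
  with assms(3) show False unfolding eigenfunction_def by blast
qed

lemma eigenvector_unique:
  assumes q_bound: "\<And>x. cmod (q x) * (1 + x\<^sup>2) \<le> C"
    and r_bound: "\<And>x. cmod (r x) * (1 + x\<^sup>2) \<le> C"
    and E: "eigenfunction q r \<zeta> Y (a, b)" and w: "is_eigenvector q r \<zeta> w"
  shows "\<exists>c. c \<noteq> 0 \<and> w = (c * a, c * b)"
proof -
  obtain a' b' Y' where w_eq: "w = (a', b')" and E': "eigenfunction q r \<zeta> Y' (a', b')"
    using w unfolding is_eigenvector_def by (cases w) auto
  have "a \<noteq> 0" "a' \<noteq> 0"
    using eigenfunction_fst_nonzero[OF q_bound r_bound] E E' by blast+
  define c where "c = a' / a"
  let ?e = "\<lambda>x. exp (\<i> * \<zeta> * of_real x)"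
  let ?W = "\<lambda>x. (fst (Y' x) - c * fst (Y x), snd (Y' x) - c * snd (Y x))"
  have lim_bot: "((\<lambda>x. ?e x * fst (Z x)) \<longlongrightarrow> fst v) at_bot"
      "((\<lambda>x. ?e x * snd (Z x)) \<longlongrightarrow> 0) at_bot"
    if "eigenfunction q r \<zeta> Z v" for Z v
    using that unfolding eigenfunction_def by (auto dest: tendsto_fst tendsto_snd)
  have "((\<lambda>x. (?e x * fst (Y' x) - c * (?e x * fst (Y x)), ?e x * snd (Y' x) - c * (?e x * snd (Y x))))
      \<longlongrightarrow> (a' - c * a, 0 - c * 0)) at_bot"
    using lim_bot[OF E] lim_bot[OF E'] by (intro tendsto_intros) auto
  moreover have "a' - c * a = 0" using \<open>a \<noteq> 0\<close> by (simp add: c_def)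
  ultimately have "((\<lambda>x. (?e x * fst (?W x), ?e x * snd (?W x))) \<longlongrightarrow> (0, 0)) at_bot"
    by (simp add: right_diff_distrib mult.left_commute)
  then have "?W x = 0" for x
    using E E' unfolding eigenfunction_def
    by (intro solves_eig_vanish_at_bot[OF q_bound r_bound] solves_eig_diff_scaled) auto
  then have Y'_eq: "snd (Y' x) = c * snd (Y x)" for x
    by (simp add: prod_eq_iff)
  have lim_top: "((\<lambda>x. exp (- \<i> * \<zeta> * of_real x) * snd (Z x)) \<longlongrightarrow> - snd v) at_top"
    if "eigenfunction q r \<zeta> Z v" for Z v
    using that unfolding eigenfunction_def by (auto dest: tendsto_snd)
  have "((\<lambda>x. exp (- \<i> * \<zeta> * of_real x) * snd (Y' x)) \<longlongrightarrow> c * - b) at_top"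
    unfolding Y'_eq using tendsto_mult_left[OF lim_top[OF E], of c] by (simp add: mult.left_commute)
  from tendsto_unique[OF _ lim_top[OF E'] this] have "b' = c * b" by simp
  moreover have "a' = c * a" "c \<noteq> 0" using \<open>a \<noteq> 0\<close> \<open>a' \<noteq> 0\<close> by (simp_all add: c_def)
  ultimately show ?thesis using w_eq by blast
qed

lemma has_vector_derivative_reflect:
  assumes "(f has_vector_derivative f') (at (- x))"
  shows "((\<lambda>x. f (- x)) has_vector_derivative - f') (at x)"
proof -
  have "(uminus has_vector_derivative (- 1 :: real)) (at x)"
    by (auto intro!: derivative_eq_intros simp flip: has_real_derivative_iff_has_vector_derivative)
  from vector_diff_chain_at[OF this] assms show ?thesis by (simp add: o_def)
qed

lemma solves_eig_reflect_conj:
  assumes r_def: "r = (\<lambda>x. - cnj (q (- x)))" and sol: "solves_eig q r \<zeta> Y"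
  shows "solves_eig q r (- cnj \<zeta>) (\<lambda>x. (cnj (snd (Y (- x))), cnj (fst (Y (- x)))))"
  unfolding solves_eig_def
proof
  fix x
  have "(Y has_vector_derivative (- \<i> * \<zeta> * fst (Y (- x)) + q (- x) * snd (Y (- x)),
      \<i> * \<zeta> * snd (Y (- x)) + r (- x) * fst (Y (- x)))) (at (- x))"
    using sol unfolding solves_eig_def by blast
  then have "((\<lambda>x. Y (- x)) has_vector_derivative - (- \<i> * \<zeta> * fst (Y (- x)) + q (- x) * snd (Y (- x)),
      \<i> * \<zeta> * snd (Y (- x)) + r (- x) * fst (Y (- x)))) (at x)"
    by (rule has_vector_derivative_reflect)
  from this[THEN bounded_linear.has_vector_derivative[OF bounded_linear_fst]]
    this[THEN bounded_linear.has_vector_derivative[OF bounded_linear_snd]]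
  show "((\<lambda>x. (cnj (snd (Y (- x))), cnj (fst (Y (- x))))) has_vector_derivative
       (- \<i> * - cnj \<zeta> * fst (cnj (snd (Y (- x))), cnj (fst (Y (- x))))
          + q x * snd (cnj (snd (Y (- x))), cnj (fst (Y (- x)))),
        \<i> * - cnj \<zeta> * snd (cnj (snd (Y (- x))), cnj (fst (Y (- x))))
          + r x * fst (cnj (snd (Y (- x))), cnj (fst (Y (- x))))))
       (at x)"
    by (auto intro!: derivative_eq_intros simp: r_def algebra_simps)
qed

lemma eigenfunction_reflect_conj:
  assumes r_def: "r = (\<lambda>x. - cnj (q (- x)))" and E: "eigenfunction q r \<zeta> Y (a, b)"
  shows "eigenfunction q r (- cnj \<zeta>) (\<lambda>x. (cnj (snd (Y (- x))), cnj (fst (Y (- x))))) (- cnj b, - cnj a)"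
proof -
  have lim_bot: "((\<lambda>x. exp (\<i> * \<zeta> * of_real x) * fst (Y x)) \<longlongrightarrow> a) at_bot"
      "((\<lambda>x. exp (\<i> * \<zeta> * of_real x) * snd (Y x)) \<longlongrightarrow> 0) at_bot"
    and lim_top: "((\<lambda>x. exp (- \<i> * \<zeta> * of_real x) * fst (Y x)) \<longlongrightarrow> 0) at_top"
      "((\<lambda>x. exp (- \<i> * \<zeta> * of_real x) * snd (Y x)) \<longlongrightarrow> - b) at_top"
    using E unfolding eigenfunction_def by (auto dest: tendsto_fst tendsto_snd)
  have exp_reflect: "exp (\<i> * - cnj \<zeta> * of_real x) * cnj w = cnj (exp (- \<i> * \<zeta> * of_real (- x)) * w)"
    "exp (- \<i> * - cnj \<zeta> * of_real x) * cnj w = cnj (exp (\<i> * \<zeta> * of_real (- x)) * w)" for x w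
    by (simp_all add: exp_cnj)
  have flip_bot: "((\<lambda>x. f (- x)) \<longlongrightarrow> l) at_bot" if "(f \<longlongrightarrow> l) at_top"
    for f :: "real \<Rightarrow> complex" and l
    using filterlim_compose[OF that filterlim_uminus_at_top_at_bot] by simp
  have flip_top: "((\<lambda>x. f (- x)) \<longlongrightarrow> l) at_top" if "(f \<longlongrightarrow> l) at_bot"
    for f :: "real \<Rightarrow> complex" and l
    using filterlim_compose[OF that filterlim_uminus_at_bot_at_top] by simp
  have "((\<lambda>x. (exp (\<i> * - cnj \<zeta> * of_real x) * cnj (snd (Y (- x))),
      exp (\<i> * - cnj \<zeta> * of_real x) * cnj (fst (Y (- x))))) \<longlongrightarrow> (- cnj b, 0)) at_bot"
    unfolding exp_reflect
    using tendsto_cnj[OF flip_bot[OF lim_top(2)]] tendsto_cnj[OF flip_bot[OF lim_top(1)]]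
    by (intro tendsto_Pair) auto
  moreover have "((\<lambda>x. (exp (- \<i> * - cnj \<zeta> * of_real x) * cnj (snd (Y (- x))),
      exp (- \<i> * - cnj \<zeta> * of_real x) * cnj (fst (Y (- x))))) \<longlongrightarrow> (0, - (- cnj a))) at_top"
    unfolding exp_reflect
    using tendsto_cnj[OF flip_top[OF lim_bot(2)]] tendsto_cnj[OF flip_top[OF lim_bot(1)]]
    by (intro tendsto_Pair) auto
  moreover obtain x where "Y x \<noteq> 0" using E unfolding eigenfunction_def by blast
  then have "\<exists>x. (cnj (snd (Y (- x))), cnj (fst (Y (- x)))) \<noteq> 0"
    by (intro exI[of _ "- x"]) (auto simp: prod_eq_iff)
  ultimately show ?thesis
    using E solves_eig_reflect_conj[OF r_def] unfolding eigenfunction_def by auto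
qed

lemma reflected_eigenvector_unique:
  assumes q_bound: "\<And>x. cmod (q x) * (1 + x\<^sup>2) \<le> C" and r_def: "r = (\<lambda>x. - cnj (q (- x)))"
    and E: "eigenfunction q r \<zeta> Y (a, b)" and w: "is_eigenvector q r (- cnj \<zeta>) w"
  shows "\<exists>c. c \<noteq> 0 \<and> w = (c * cnj b, c * cnj a)"
proof -
  have r_bound: "cmod (r x) * (1 + x\<^sup>2) \<le> C" for x
    using q_bound[of "- x"] by (simp add: r_def)
  obtain c where "c \<noteq> 0" "w = (c * - cnj b, c * - cnj a)"
    using eigenvector_unique[OF q_bound r_bound eigenfunction_reflect_conj[OF r_def E] w] by blast
  then show ?thesis by (intro exI[of _ "- c"]) simp
qed

lemma imaginary_eigenvector_unimodular:
  assumes q_bound: "\<And>x. cmod (q x) * (1 + x\<^sup>2) \<le> C" and r_def: "r = (\<lambda>x. - cnj (q (- x)))"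
    and "Re \<zeta> = 0" and v: "is_eigenvector q r \<zeta> (a, b)"
  shows "\<exists>\<theta>::real. b / a = exp (\<i> * of_real \<theta>)"
proof -
  obtain Y where E: "eigenfunction q r \<zeta> Y (a, b)" using v unfolding is_eigenvector_def by blast
  have r_bound: "cmod (r x) * (1 + x\<^sup>2) \<le> C" for x
    using q_bound[of "- x"] by (simp add: r_def)
  have "a \<noteq> 0" by (rule eigenfunction_fst_nonzero[OF q_bound r_bound E])
  have "- cnj \<zeta> = \<zeta>" using \<open>Re \<zeta> = 0\<close> by (simp add: complex_eq_iff)
  with v have "is_eigenvector q r (- cnj \<zeta>) (a, b)" by simp
  from reflected_eigenvector_unique[OF q_bound r_def E this]
  obtain c where ca: "a = c * cnj b" and cb: "b = c * cnj a" by auto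
  have "cmod a = cmod c * cmod b" "cmod b = cmod c * cmod a"
    using arg_cong[OF ca, of cmod] arg_cong[OF cb, of cmod] by (simp_all add: norm_mult)
  then have "1 * cmod a = (cmod c)\<^sup>2 * cmod a" by (simp add: power2_eq_square)
  with \<open>a \<noteq> 0\<close> have "cmod c = 1"
    using norm_ge_zero[of c] by (auto simp: power2_eq_1_iff)
  with \<open>cmod b = cmod c * cmod a\<close> \<open>a \<noteq> 0\<close> have "cmod (b / a) = 1" by (simp add: norm_divide)
  then show ?thesis by (metis complex_norm_eq_1_exp)
qed

lemma adj_eigenfunction_iff_eigenfunction:
  "adj_eigenfunction q r \<zeta> K v \<longleftrightarrow> eigenfunction (\<lambda>x. - r x) (\<lambda>x. - q x) (- \<zeta>) K v"
proof -
  have adj_as_eig: "(\<i> * \<zeta> * fst (K x) - snd (K x) * r x, - \<i> * \<zeta> * snd (K x) - fst (K x) * q x)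
      = (- \<i> * - \<zeta> * fst (K x) + - r x * snd (K x), \<i> * - \<zeta> * snd (K x) + - q x * fst (K x))" for x
    by (simp add: prod_eq_iff algebra_simps)
  have "solves_adj q r \<zeta> K \<longleftrightarrow> solves_eig (\<lambda>x. - r x) (\<lambda>x. - q x) (- \<zeta>) K"
    unfolding solves_adj_def solves_eig_def adj_as_eig by (rule refl)
  then show ?thesis unfolding adj_eigenfunction_def eigenfunction_def by simp
qed

lemma reverse_space_adjoint_pair:
  fixes q r :: "real \<Rightarrow> complex"
  assumes "r = (\<lambda>x. - cnj (q (- x)))"
  shows "(\<lambda>x. - q x) = (\<lambda>x. - cnj (- (r (- x))))"
  using assms by simp

lemma adj_eigenfunction_reflect_conj:
  assumes r_def: "r = (\<lambda>x. - cnj (q (- x)))" and "adj_eigenfunction q r \<zeta> K (a, b)"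
  shows "adj_eigenfunction q r (- cnj \<zeta>) (\<lambda>x. (cnj (snd (K (- x))), cnj (fst (K (- x))))) (- cnj b, - cnj a)"
proof -
  have "eigenfunction (\<lambda>x. - r x) (\<lambda>x. - q x) (- \<zeta>) K (a, b)"
    using assms(2) unfolding adj_eigenfunction_iff_eigenfunction .
  from eigenfunction_reflect_conj[OF reverse_space_adjoint_pair[OF r_def] this]
  show ?thesis unfolding adj_eigenfunction_iff_eigenfunction minus_minus complex_cnj_minus .
qed

lemma reflected_adj_eigenvector_unique:
  assumes q_bound: "\<And>x. cmod (q x) * (1 + x\<^sup>2) \<le> C" and r_def: "r = (\<lambda>x. - cnj (q (- x)))"
    and "adj_eigenfunction q r \<zeta> K (a, b)" and "is_adj_eigenvector q r (- cnj \<zeta>) w"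
  shows "\<exists>c. c \<noteq> 0 \<and> w = (c * cnj b, c * cnj a)"
proof -
  have bound: "cmod (- r x) * (1 + x\<^sup>2) \<le> C" for x
    using q_bound[of "- x"] by (simp add: r_def)
  have E: "eigenfunction (\<lambda>x. - r x) (\<lambda>x. - q x) (- \<zeta>) K (a, b)"
    using assms(3) unfolding adj_eigenfunction_iff_eigenfunction .
  have w: "is_eigenvector (\<lambda>x. - r x) (\<lambda>x. - q x) (- cnj (- \<zeta>)) w"
    using assms(4) unfolding is_adj_eigenvector_def is_eigenvector_def adj_eigenfunction_iff_eigenfunction
    by simp
  show ?thesis
    using reflected_eigenvector_unique[OF bound reverse_space_adjoint_pair[OF r_def] E w] .
qed

lemma imaginary_adj_eigenvector_unimodular:
  assumes q_bound: "\<And>x. cmod (q x) * (1 + x\<^sup>2) \<le> C" and r_def: "r = (\<lambda>x. - cnj (q (- x)))"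
    and "Re \<zeta> = 0" and "is_adj_eigenvector q r \<zeta> (a, b)"
  shows "\<exists>\<theta>::real. b / a = exp (\<i> * of_real \<theta>)"
proof -
  have bound: "cmod (- r x) * (1 + x\<^sup>2) \<le> C" for x
    using q_bound[of "- x"] by (simp add: r_def)
  have Re: "Re (- \<zeta>) = 0" using \<open>Re \<zeta> = 0\<close> by simp
  have v: "is_eigenvector (\<lambda>x. - r x) (\<lambda>x. - q x) (- \<zeta>) (a, b)"
    using assms(4) unfolding is_adj_eigenvector_def is_eigenvector_def adj_eigenfunction_iff_eigenfunction .
  show ?thesis
    using imaginary_eigenvector_unimodular[OF bound reverse_space_adjoint_pair[OF r_def] Re v] .
qed

lemma schwartz_weighted_bound:
  assumes "schwartz q"
  obtains C where "\<And>x. cmod (q x) * (1 + x\<^sup>2) \<le> C"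
proof -
  obtain D :: "nat \<Rightarrow> real \<Rightarrow> complex"
    where "D 0 = q" and bounded: "\<And>m n. bounded (range (\<lambda>x. of_real (x ^ m) * D n x))"
    using assms unfolding schwartz_def by blast
  then obtain B0 B2
    where B0: "\<And>x. cmod (q x) \<le> B0" and B2: "\<And>x. cmod (of_real (x\<^sup>2) * q x) \<le> B2"
    using bounded[of 0 0] bounded[of 2 0] unfolding bounded_iff by auto
  have "cmod (q x) * (1 + x\<^sup>2) \<le> B0 + B2" for x
    using add_mono[OF B0[of x] B2[of x]] by (simp add: norm_mult norm_power algebra_simps)
  then show ?thesis by (rule that)
qed

theorem theorem1:
  fixes q :: "real \<Rightarrow> complex"
  assumes "schwartz q"
  defines "r \<equiv> (\<lambda>x. - cnj (q (- x)))"
  shows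
   "(\<forall>\<zeta> Y a b. eigenfunction q r \<zeta> Y (a, b) \<longrightarrow>
        is_eigenvalue q r (- cnj \<zeta>) \<and>
        eigenfunction q r (- cnj \<zeta>) (\<lambda>x. (cnj (snd (Y (- x))), cnj (fst (Y (- x))))) (- cnj b, - cnj a) \<and>
        (Re \<zeta> \<noteq> 0 \<longrightarrow> (\<forall>w. is_eigenvector q r (- cnj \<zeta>) w \<longrightarrow>
            (\<exists>c. c \<noteq> 0 \<and> w = (c * cnj b, c * cnj a))))) \<and>
    (\<forall>\<zeta> a b. Re \<zeta> = 0 \<and> Im \<zeta> > 0 \<and> is_eigenvector q r \<zeta> (a, b) \<longrightarrow>
        (\<exists>\<theta>::real. b / a = exp (\<i> * of_real \<theta>))) \<and>
    (\<forall>\<zeta> K a b. adj_eigenfunction q r \<zeta> K (a, b) \<longrightarrow>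
        is_adj_eigenvalue q r (- cnj \<zeta>) \<and>
        adj_eigenfunction q r (- cnj \<zeta>) (\<lambda>x. (cnj (snd (K (- x))), cnj (fst (K (- x))))) (- cnj b, - cnj a) \<and>
        (Re \<zeta> \<noteq> 0 \<longrightarrow> (\<forall>w. is_adj_eigenvector q r (- cnj \<zeta>) w \<longrightarrow>
            (\<exists>c. c \<noteq> 0 \<and> w = (c * cnj b, c * cnj a))))) \<and>
    (\<forall>\<zeta> a b. Re \<zeta> = 0 \<and> Im \<zeta> < 0 \<and> is_adj_eigenvector q r \<zeta> (a, b) \<longrightarrow>
        (\<exists>\<theta>::real. b / a = exp (\<i> * of_real \<theta>)))"
proof -
  obtain C where q_bound: "\<And>x. cmod (q x) * (1 + x\<^sup>2) \<le> C"
    using schwartz_weighted_bound[OF assms(1)] by blast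
  have r_def': "r = (\<lambda>x. - cnj (q (- x)))" unfolding r_def ..
  note reflect = eigenfunction_reflect_conj[OF r_def'] adj_eigenfunction_reflect_conj[OF r_def']
  note unique = reflected_eigenvector_unique[OF q_bound r_def'] reflected_adj_eigenvector_unique[OF q_bound r_def']
  note unimodular = imaginary_eigenvector_unimodular[OF q_bound r_def']
    imaginary_adj_eigenvector_unimodular[OF q_bound r_def']
  show ?thesis
    unfolding is_eigenvalue_def is_adj_eigenvalue_def by (blast intro: reflect unique unimodular)
qed

end
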